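(* Let $X$ be a finite rack with connected components $C_1,\dots,C_k$. There exists $N$ (depending on $X$) such that for all integers $n_1,\dots,n_k\ge N$ with $n=n_1+\dots+n_k$, all nonnegative integers $m_1,\dots,m_k$ with $m=m_1+\dots+m_k$, and every $w\in X(m_1,\dots,m_k)/B_m$, the map \[ M_w:X^*(n_1,\dots,n_k)/B_n\to X^*(n_1+m_1,\dots,n_k+m_k)/B_{n+m},\qquad M_w(v)=wv \] (concatenation of representatives) is surjective.
   Context: A rack is a set $X$ with an operation $x^y$ such that $x\mapsto x^y$ is bijective for each $y$ and $(z^x)^y=(z^y)^{x^y}$. Its connected components are the classes of the smallest equivalence relation with $x\sim x^y$ for all $x,y$. $B_n$ (generators $\sigma_1,\dots,\sigma_{n-1}$) acts on $X^n$ from the right by $(\dots,x_i,x_{i+1},\dots)^{\sigma_i}=(\dots,x_{i+1},x_i^{x_{i+1}},\dots)$. For nonnegative integers $n_1,\dots,n_k$, $X(n_1,\dots,n_k)$ is the set of $(x_1,\dots,x_n)\in X^n$ with exactly $n_j$ entries in $C_j$ for each $j$, and $X^*(n_1,\dots,n_k)$ is the subset of those whose entries generate $X$ (i.e. lie in no proper subset $X_0$ closed under $x^y$); both are $B_n$-stable. Concatenation of tuples is compatible with $B_m\times B_{n}\hookrightarrow B_{m+n}$, giving a well-defined product of orbits. *)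

theory Defs
  imports Main
begin

text \<open>A rack on the carrier X with operation op, where op x y stands for x^y.\<close>
definition rack :: "'a set \<Rightarrow> ('a \<Rightarrow> 'a \<Rightarrow> 'a) \<Rightarrow> bool" where
  "rack X op \<longleftrightarrow>
     (\<forall>x\<in>X. \<forall>y\<in>X. op x y \<in> X) \<and>
     (\<forall>y\<in>X. bij_betw (\<lambda>x. op x y) X X) \<and>
     (\<forall>x\<in>X. \<forall>y\<in>X. \<forall>z\<in>X. op (op z x) y = op (op z y) (op x y))"

definition rack_conn :: "'a set \<Rightarrow> ('a \<Rightarrow> 'a \<Rightarrow> 'a) \<Rightarrow> ('a \<times> 'a) set" where
  "rack_conn X op =
     Restr (({(x, op x y) | x y. x \<in> X \<and> y \<in> X} \<union>
             {(op x y, x) | x y. x \<in> X \<and> y \<in> X})\<^sup>*) X"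

definition components :: "'a set \<Rightarrow> ('a \<Rightarrow> 'a \<Rightarrow> 'a) \<Rightarrow> 'a set set" where
  "components X op = X // rack_conn X op"

text \<open>X(n_1,...,n_k): tuples (lists) over X with exactly n C entries in each component C.\<close>
definition tuples :: "'a set \<Rightarrow> ('a \<Rightarrow> 'a \<Rightarrow> 'a) \<Rightarrow> ('a set \<Rightarrow> nat) \<Rightarrow> 'a list set" where
  "tuples X op n = {xs. set xs \<subseteq> X \<and>
     (\<forall>C\<in>components X op. length (filter (\<lambda>x. x \<in> C) xs) = n C)}"

definition generates :: "'a set \<Rightarrow> ('a \<Rightarrow> 'a \<Rightarrow> 'a) \<Rightarrow> 'a list \<Rightarrow> bool" where
  "generates X op xs \<longleftrightarrow>
     (\<forall>X0. X0 \<subseteq> X \<and> set xs \<subseteq> X0 \<and> (\<forall>a\<in>X0. \<forall>b\<in>X0. op a b \<in> X0) \<longrightarrow> X0 = X)"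

definition tuples_gen :: "'a set \<Rightarrow> ('a \<Rightarrow> 'a \<Rightarrow> 'a) \<Rightarrow> ('a set \<Rightarrow> nat) \<Rightarrow> 'a list set" where
  "tuples_gen X op n = {xs \<in> tuples X op n. generates X op xs}"

text \<open>Action of the generator sigma_i (0-based index i here).\<close>
definition braid_step :: "('a \<Rightarrow> 'a \<Rightarrow> 'a) \<Rightarrow> 'a list \<Rightarrow> 'a list \<Rightarrow> bool" where
  "braid_step op xs ys \<longleftrightarrow>
     (\<exists>i. Suc i < length xs \<and>
        ys = xs[i := xs ! Suc i, Suc i := op (xs ! i) (xs ! Suc i)])"

text \<open>Same B_n-orbit: equivalence generated by the sigma_i moves (and their inverses).\<close>
definition braid_equiv :: "('a \<Rightarrow> 'a \<Rightarrow> 'a) \<Rightarrow> ('a list \<times> 'a list) set" where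
  "braid_equiv op = ({(xs, ys). braid_step op xs ys} \<union> {(ys, xs). braid_step op xs ys})\<^sup>*"

end

theory Submission
  imports Defs
begin

(*
  Let P = |X|!. Every right translation x |-> x^z permutes X, so applying it P times is the
  identity. Hence a block z^P of P equal entries braids past any entry without changing it,
  while pulling it across an entry r turns it into the block (z^r)^P. In a tuple z^P rs the
  block can therefore be conjugated by the subrack generated by rs; when rs generates X, z can
  be replaced by any element of its connected component.

  Now let us generate X with more than |X| P entries in the component of w. By pigeonhole
  some v of that component occurs more than P times. Braiding P copies of v to the front
  conjugates the entries they pass by v, which keeps the remainder generating because X is
  finite (a finite closed subset containing v and y^v contains y). Replacing v^P by w^P gives
  us ~ w vs with vs generating and of the right type, and induction on the length of ws
  yields the theorem with N = |X| |X|!.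
*)

lemma braid_step_append_Cons: "braid_step op (p @ a # b # s) (p @ b # op a b # s)"
  unfolding braid_step_def
  by (rule exI[of _ "length p"]) (simp add: list_update_append nth_append)

lemma braid_step_iff:
  "braid_step op xs ys \<longleftrightarrow> (\<exists>p a b s. xs = p @ a # b # s \<and> ys = p @ b # op a b # s)"
proof
  assume "braid_step op xs ys"
  then obtain i where i: "Suc i < length xs"
    and ys: "ys = xs[i := xs ! Suc i, Suc i := op (xs ! i) (xs ! Suc i)]"
    unfolding braid_step_def by blast
  define p where "p = take i xs"
  define s where "s = drop (Suc (Suc i)) xs"
  have xs: "xs = p @ xs ! i # xs ! Suc i # s"
    using i unfolding p_def s_def by (simp add: Cons_nth_drop_Suc id_take_nth_drop)
  have "length p = i"
    using i by (simp add: p_def)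
  then have "ys = p @ xs ! Suc i # op (xs ! i) (xs ! Suc i) # s"
    by (subst ys, subst xs) (simp add: list_update_append)
  with xs show "\<exists>p a b s. xs = p @ a # b # s \<and> ys = p @ b # op a b # s"
    by blast
qed (auto simp: braid_step_append_Cons)

lemma braid_step_append_left: "braid_step op xs ys \<Longrightarrow> braid_step op (q @ xs) (q @ ys)"
  unfolding braid_step_iff by (metis append.assoc)

(* Orbits of the positive braid monoid: unlike inverse moves, these visibly keep entries in X. *)
definition braid_reach :: "('a \<Rightarrow> 'a \<Rightarrow> 'a) \<Rightarrow> ('a list \<times> 'a list) set" where
  "braid_reach op = {(xs, ys). braid_step op xs ys}\<^sup>*"

lemma braid_reach_refl: "(xs, xs) \<in> braid_reach op"
  unfolding braid_reach_def by simp

lemma braid_reach_step: "(p @ a # b # s, p @ b # op a b # s) \<in> braid_reach op"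
  unfolding braid_reach_def by (simp add: braid_step_append_Cons r_into_rtrancl)

lemma braid_reach_trans:
  "(xs, ys) \<in> braid_reach op \<Longrightarrow> (ys, zs) \<in> braid_reach op \<Longrightarrow> (xs, zs) \<in> braid_reach op"
  unfolding braid_reach_def by (rule rtrancl_trans)

lemma braid_reach_imp_braid_equiv: "(xs, ys) \<in> braid_reach op \<Longrightarrow> (xs, ys) \<in> braid_equiv op"
  unfolding braid_reach_def braid_equiv_def by (erule rtrancl_mono[THEN subsetD, rotated]) blast

lemma braid_equiv_refl: "(xs, xs) \<in> braid_equiv op"
  unfolding braid_equiv_def by simp

lemma braid_equiv_sym: "(xs, ys) \<in> braid_equiv op \<Longrightarrow> (ys, xs) \<in> braid_equiv op"
  unfolding braid_equiv_def by (rule symD[OF sym_rtrancl]) (auto intro: symI)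

lemma braid_equiv_trans:
  "(xs, ys) \<in> braid_equiv op \<Longrightarrow> (ys, zs) \<in> braid_equiv op \<Longrightarrow> (xs, zs) \<in> braid_equiv op"
  unfolding braid_equiv_def by (rule rtrancl_trans)

lemma braid_equiv_append_left:
  assumes "(xs, ys) \<in> braid_equiv op"
  shows "(q @ xs, q @ ys) \<in> braid_equiv op"
  using assms unfolding braid_equiv_def
proof (induction rule: rtrancl_induct)
  case (step ys zs)
  then have "(q @ ys, q @ zs) \<in> {(xs, ys). braid_step op xs ys} \<union> {(ys, xs). braid_step op xs ys}"
    by (auto intro: braid_step_append_left)
  with step.IH show ?case
    by (rule rtrancl_into_rtrancl)
qed simp

lemma braid_reach_move_left:
  "(p @ as @ b # s, p @ b # map (\<lambda>a. op a b) as @ s) \<in> braid_reach op"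
proof (induction as arbitrary: s rule: rev_induct)
  case (snoc a as)
  have "(p @ (as @ [a]) @ b # s, (p @ as) @ b # op a b # s) \<in> braid_reach op"
    using braid_reach_step[of "p @ as" a b s op] by simp
  with snoc[of "op a b # s"] show ?case
    by (auto intro: braid_reach_trans)
qed (simp add: braid_reach_refl)

lemma braid_reach_move_right:
  "(p @ a # bs @ s, p @ bs @ foldl op a bs # s) \<in> braid_reach op"
proof (induction bs arbitrary: p a)
  case (Cons b bs)
  have "(p @ a # b # bs @ s, (p @ [b]) @ op a b # bs @ s) \<in> braid_reach op"
    using braid_reach_step[of p a b "bs @ s" op] by simp
  with Cons[of "p @ [b]" "op a b"] show ?case
    by (auto intro: braid_reach_trans)
qed (simp add: braid_reach_refl)

lemma funpow_fact_card_fixpoint: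
  assumes "finite X" and f: "bij_betw f X X" and x: "x \<in> X"
  shows "(f ^^ fact (card X)) x = x"
proof -
  have orbit_in: "(f ^^ i) x \<in> X" for i
    using bij_betw_funpow[OF f, of i] x by (auto simp: bij_betw_def)
  have "\<not> inj_on (\<lambda>i. (f ^^ i) x) {0..card X}"
  proof
    assume "inj_on (\<lambda>i. (f ^^ i) x) {0..card X}"
    then have "card {0..card X} \<le> card X"
      using card_inj_on_le[of "\<lambda>i. (f ^^ i) x" "{0..card X}" X] \<open>finite X\<close> orbit_in by auto
    then show False by simp
  qed
  then obtain i j where ij: "i < j" "j \<le> card X" and eq: "(f ^^ i) x = (f ^^ j) x"
    unfolding inj_on_def by (metis atLeastAtMost_iff linorder_neqE_nat)
  have "(f ^^ i) ((f ^^ (j - i)) x) = (f ^^ i) x"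
    using ij eq by (simp flip: funpow_add[unfolded comp_def, THEN fun_cong])
  moreover have "inj_on (f ^^ i) X"
    using bij_betw_funpow[OF f, of i] by (auto simp: bij_betw_def)
  ultimately have period: "(f ^^ (j - i)) x = x"
    using orbit_in x by (auto simp: inj_on_def)
  have "(f ^^ fact (card X)) x = (f ^^ (fact (card X) mod (j - i))) x"
    by (rule funpow_mod_eq[OF period, symmetric])
  also have "fact (card X) mod (j - i) = 0"
    using ij by (simp add: dvd_fact)
  finally show ?thesis
    by simp
qed

lemma exists_count_list_gt:
  assumes "finite C" and many: "card C * k < length (filter (\<lambda>x. x \<in> C) xs)"
  shows "\<exists>v\<in>C. k < count_list xs v"
proof (rule ccontr)
  assume "\<not> ?thesis"
  moreover have "count_list (filter (\<lambda>x. x \<in> C) xs) v = count_list xs v" if "v \<in> C" for v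
    using that by (induction xs) auto
  ultimately have "(\<Sum>v\<in>C. count_list (filter (\<lambda>x. x \<in> C) xs) v) \<le> card C * k"
    using sum_bounded_above[of C _ k] by (simp add: not_less)
  moreover have "(\<Sum>v\<in>C. count_list (filter (\<lambda>x. x \<in> C) xs) v) = length (filter (\<lambda>x. x \<in> C) xs)"
    by (rule sum_count_set) (auto simp: \<open>finite C\<close>)
  ultimately show False
    using many by simp
qed

lemma equiv_rack_conn: "equiv X (rack_conn X op)"
proof -
  let ?S = "{(x, op x y) | x y. x \<in> X \<and> y \<in> X} \<union> {(op x y, x) | x y. x \<in> X \<and> y \<in> X}"
  have "sym (?S\<^sup>*)"
    by (rule sym_rtrancl) (auto simp: sym_def)
  then show ?thesis
    unfolding rack_conn_def
    by (intro equivI refl_onI symI transI) (auto dest: symD intro: rtrancl_trans)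
qed

lemma component_mem_iff:
  assumes "C \<in> components X op" and "(x, y) \<in> rack_conn X op"
  shows "x \<in> C \<longleftrightarrow> y \<in> C"
  using assms equiv_rack_conn[of X op] unfolding components_def
  by (meson in_quotient_imp_closed equiv_def symD)

lemma component_of:
  assumes "w \<in> X"
  shows "rack_conn X op `` {w} \<in> components X op" and "w \<in> rack_conn X op `` {w}"
  using assms equiv_class_self[OF equiv_rack_conn] unfolding components_def
  by (auto intro: quotientI)

lemma rack_conn_subset: "rack_conn X op \<subseteq> X \<times> X"
  unfolding rack_conn_def by auto

lemma rack_conn_invariant:
  assumes inv: "\<forall>x\<in>X. \<forall>y\<in>X. x \<in> Z \<longleftrightarrow> op x y \<in> Z" and vw: "(v, w) \<in> rack_conn X op"
  shows "v \<in> Z \<longleftrightarrow> w \<in> Z"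
proof -
  let ?S = "{(x, op x y) | x y. x \<in> X \<and> y \<in> X} \<union> {(op x y, x) | x y. x \<in> X \<and> y \<in> X}"
  have "(v, w) \<in> ?S\<^sup>*"
    using vw unfolding rack_conn_def by auto
  then show ?thesis
    by (induction rule: rtrancl_induct) (use inv in auto)
qed

lemma Cons_in_tuplesD:
  "w # ws \<in> tuples X op m \<Longrightarrow> ws \<in> tuples X op (\<lambda>C. if w \<in> C then m C - 1 else m C)"
  unfolding tuples_def by auto

lemma replicate_append_in_tuples_conn:
  assumes "(v, w) \<in> rack_conn X op" and "replicate k v @ rs \<in> tuples X op n"
  shows "replicate k w @ rs \<in> tuples X op n"
proof -
  have "w \<in> X"
    using assms(1) rack_conn_subset by blast
  moreover have "v \<in> C \<longleftrightarrow> w \<in> C" if "C \<in> components X op" for C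
    using component_mem_iff[OF that assms(1)] .
  ultimately show ?thesis
    using assms(2) by (auto simp: tuples_def filter_replicate)
qed

lemma generates_mono: "generates X op xs \<Longrightarrow> set xs \<subseteq> set ys \<Longrightarrow> generates X op ys"
  unfolding generates_def by blast

locale rack_structure =
  fixes X :: "'a set" and op :: "'a \<Rightarrow> 'a \<Rightarrow> 'a"
  assumes rack: "rack X op"
begin

lemma op_closed: "x \<in> X \<Longrightarrow> y \<in> X \<Longrightarrow> op x y \<in> X"
  using rack unfolding rack_def by blast

lemma bij_betw_op_right: "y \<in> X \<Longrightarrow> bij_betw (\<lambda>x. op x y) X X"
  using rack unfolding rack_def by blast

lemma op_self_distrib:
  "x \<in> X \<Longrightarrow> y \<in> X \<Longrightarrow> z \<in> X \<Longrightarrow> op (op z x) y = op (op z y) (op x y)"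
  using rack unfolding rack_def by blast

lemma rack_conn_op: "x \<in> X \<Longrightarrow> y \<in> X \<Longrightarrow> (x, op x y) \<in> rack_conn X op"
  unfolding rack_conn_def using op_closed by blast

lemma braid_reach_tuples:
  assumes "(xs, ys) \<in> braid_reach op" and "xs \<in> tuples X op n"
  shows "ys \<in> tuples X op n"
  using assms(1) unfolding braid_reach_def
proof (induction rule: rtrancl_induct)
  case (step ys zs)
  then obtain p a b s where split: "ys = p @ a # b # s" "zs = p @ b # op a b # s"
    by (auto simp: braid_step_iff)
  with step.IH have "a \<in> X" "b \<in> X"
    by (auto simp: tuples_def)
  then have "set zs \<subseteq> X"
    using step.IH op_closed unfolding split by (auto simp: tuples_def)
  moreover have "length (filter (\<lambda>x. x \<in> C) zs) = length (filter (\<lambda>x. x \<in> C) ys)"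
    if "C \<in> components X op" for C
    using component_mem_iff[OF that rack_conn_op[OF \<open>a \<in> X\<close> \<open>b \<in> X\<close>]] unfolding split by auto
  ultimately show ?case
    using step.IH by (auto simp: tuples_def)
qed (use assms(2) in simp)

definition stabilizer :: "'a set \<Rightarrow> 'a set" where
  "stabilizer Z = {y \<in> X. \<forall>x\<in>X. x \<in> Z \<longleftrightarrow> op x y \<in> Z}"

lemma stabilizer_op_closed:
  assumes y1: "y1 \<in> stabilizer Z" and y2: "y2 \<in> stabilizer Z"
  shows "op y1 y2 \<in> stabilizer Z"
proof -
  have y1X: "y1 \<in> X" and y2X: "y2 \<in> X"
    using y1 y2 by (auto simp: stabilizer_def)
  have "x \<in> Z \<longleftrightarrow> op x (op y1 y2) \<in> Z" if "x \<in> X" for x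
  proof -
    obtain x' where x': "x' \<in> X" "x = op x' y2"
      using bij_betw_imp_surj_on[OF bij_betw_op_right[OF y2X]] \<open>x \<in> X\<close> by blast
    have "x \<in> Z \<longleftrightarrow> x' \<in> Z"
      using y2 x' by (auto simp: stabilizer_def)
    also have "\<dots> \<longleftrightarrow> op x' y1 \<in> Z"
      using y1 x' by (auto simp: stabilizer_def)
    also have "\<dots> \<longleftrightarrow> op (op x' y1) y2 \<in> Z"
      using y2 op_closed[OF x'(1) y1X] by (auto simp: stabilizer_def)
    also have "op (op x' y1) y2 = op x (op y1 y2)"
      using op_self_distrib[OF y1X y2X x'(1)] x'(2) by simp
    finally show ?thesis .
  qed
  then show ?thesis
    using op_closed[OF y1X y2X] by (auto simp: stabilizer_def)
qed

end

locale finite_rack = rack_structure +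
  assumes finite_carrier: "finite X"
begin

abbreviation period :: nat where
  "period \<equiv> fact (card X)"

lemma foldl_replicate_period: "a \<in> X \<Longrightarrow> z \<in> X \<Longrightarrow> foldl op a (replicate period z) = a"
  using funpow_fact_card_fixpoint[OF finite_carrier bij_betw_op_right]
  by (simp add: foldl_conv_fold)

lemma braid_reach_block_left:
  assumes "z \<in> X" and "set as \<subseteq> X"
  shows "(p @ as @ replicate period z @ s, p @ replicate period z @ as @ s) \<in> braid_reach op"
  using assms(2)
proof (induction as arbitrary: p)
  case (Cons a as)
  have "(p @ (a # as) @ replicate period z @ s, (p @ [a]) @ replicate period z @ as @ s)
      \<in> braid_reach op"
    using Cons.IH[of "p @ [a]"] Cons.prems by simp
  moreover have "(p @ a # replicate period z @ as @ s, p @ replicate period z @ a # as @ s)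
      \<in> braid_reach op"
    using braid_reach_move_right[of p a "replicate period z" "as @ s" op]
      foldl_replicate_period[of a z] Cons.prems assms(1) by simp
  ultimately show ?case
    by (auto intro: braid_reach_trans)
qed (simp add: braid_reach_refl)

lemma braid_equiv_block_conjugate:
  assumes "z \<in> X" and "set rs \<subseteq> X" and "r \<in> set rs"
  shows "(replicate period z @ rs, replicate period (op z r) @ rs) \<in> braid_equiv op"
proof -
  obtain ps s where rs: "rs = ps @ r # s"
    using split_list[OF assms(3)] by blast
  have ps: "set ps \<subseteq> X" and r: "r \<in> X"
    using assms(2) rs by auto
  have commute: "(ps @ replicate period z @ r # s, replicate period z @ ps @ r # s) \<in> braid_reach op"
    using braid_reach_block_left[OF assms(1) ps, of "[]"] by simp
  have conjugate: "(ps @ replicate period z @ r # s, replicate period (op z r) @ ps @ r # s)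
      \<in> braid_reach op"
  proof (rule braid_reach_trans)
    show "(ps @ replicate period z @ r # s, ps @ r # replicate period (op z r) @ s)
      \<in> braid_reach op"
      using braid_reach_move_left[of ps "replicate period z" r s op] by simp
    show "(ps @ r # replicate period (op z r) @ s, replicate period (op z r) @ ps @ r # s)
      \<in> braid_reach op"
      using braid_reach_block_left[OF op_closed[OF assms(1) r], of "ps @ [r]" "[]" s] ps r by simp
  qed
  show ?thesis
    unfolding rs
    using braid_equiv_trans[OF braid_equiv_sym[OF braid_reach_imp_braid_equiv[OF commute]]
        braid_reach_imp_braid_equiv[OF conjugate]] .
qed

lemma braid_equiv_block_conn:
  assumes rs: "set rs \<subseteq> X" "generates X op rs" and vw: "(v, w) \<in> rack_conn X op"
  shows "(replicate period v @ rs, replicate period w @ rs) \<in> braid_equiv op"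
proof -
  define Z where "Z = {z. (replicate period v @ rs, replicate period z @ rs) \<in> braid_equiv op}"
  have "y \<in> stabilizer Z" if y: "y \<in> set rs" for y
  proof -
    have "x \<in> Z \<longleftrightarrow> op x y \<in> Z" if "x \<in> X" for x
      using braid_equiv_block_conjugate[OF that rs(1) y] unfolding Z_def mem_Collect_eq
      by (blast intro: braid_equiv_trans braid_equiv_sym)
    then show ?thesis
      using y rs(1) by (auto simp: stabilizer_def)
  qed
  moreover have "stabilizer Z \<subseteq> X"
    by (auto simp: stabilizer_def)
  ultimately have "stabilizer Z = X"
    using rs(2) stabilizer_op_closed unfolding generates_def by blast
  then have "\<forall>x\<in>X. \<forall>y\<in>X. x \<in> Z \<longleftrightarrow> op x y \<in> Z"
    unfolding stabilizer_def by blast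
  moreover have "v \<in> Z"
    by (simp add: Z_def braid_equiv_refl)
  ultimately have "w \<in> Z"
    using rack_conn_invariant[OF _ vw] by blast
  then show ?thesis
    by (simp add: Z_def)
qed

lemma closed_subset_right_cancel:
  assumes X0: "X0 \<subseteq> X" "\<forall>a\<in>X0. \<forall>b\<in>X0. op a b \<in> X0"
    and y: "y \<in> X0" and p: "p \<in> X" "op p y \<in> X0"
  shows "p \<in> X0"
proof -
  have inj: "inj_on (\<lambda>x. op x y) X"
    using bij_betw_op_right[of y] X0(1) y by (auto simp: bij_betw_def)
  have "(\<lambda>x. op x y) ` X0 = X0"
    using X0 y finite_subset[OF X0(1) finite_carrier] inj_on_subset[OF inj X0(1)]
    by (intro endo_inj_surj) auto
  then obtain q where "q \<in> X0" "op q y = op p y"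
    using p(2) by force
  with inj p(1) X0(1) show ?thesis
    by (auto simp: inj_on_def)
qed

lemma generates_conjugate_prefix:
  assumes gen: "generates X op (ps @ s)" and set: "set (ps @ s) \<subseteq> X" and v: "v \<in> set s"
  shows "generates X op (map (\<lambda>a. op a v) ps @ s)"
  unfolding generates_def
proof (intro allI impI)
  fix X0
  assume "X0 \<subseteq> X \<and> set (map (\<lambda>a. op a v) ps @ s) \<subseteq> X0 \<and> (\<forall>a\<in>X0. \<forall>b\<in>X0. op a b \<in> X0)"
  then have X0: "X0 \<subseteq> X" "\<forall>a\<in>X0. \<forall>b\<in>X0. op a b \<in> X0"
    and conj: "\<And>a. a \<in> set ps \<Longrightarrow> op a v \<in> X0" and s: "set s \<subseteq> X0"
    by auto
  have "set ps \<subseteq> X0"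
  proof
    fix a
    assume "a \<in> set ps"
    then show "a \<in> X0"
      using closed_subset_right_cancel[OF X0] s v set conj[of a] by auto
  qed
  with X0 s gen show "X0 = X"
    unfolding generates_def by auto
qed

lemma braid_reach_gather:
  assumes t: "set t \<subseteq> X" "generates X op t"
  shows "k < count_list t v \<Longrightarrow> \<exists>rs. (t, replicate k v @ rs) \<in> braid_reach op \<and>
    set rs \<subseteq> X \<and> generates X op rs \<and> count_list t v \<le> count_list rs v + k"
proof (induction k)
  case 0
  with t show ?case
    by (auto intro: braid_reach_refl)
next
  case (Suc k)
  then obtain rs where rs: "(t, replicate k v @ rs) \<in> braid_reach op" "set rs \<subseteq> X"
    "generates X op rs" "count_list t v \<le> count_list rs v + k"
    by auto
  define c where "c = count_list rs v - 1"
  have c: "count_list rs v = Suc c" "0 < c"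
    using rs(4) Suc.prems unfolding c_def by linarith+
  then obtain ps s where split: "rs = ps @ v # s" "count_list s v = c"
    using count_list_Suc_split_first by metis
  have "v \<in> set s"
    using split(2) c(2) count_notin by fastforce
  define rs' where "rs' = map (\<lambda>a. op a v) ps @ s"
  have "(replicate k v @ ps @ v # s, replicate k v @ v # rs') \<in> braid_reach op"
    unfolding rs'_def by (rule braid_reach_move_left)
  then have "(t, replicate (Suc k) v @ rs') \<in> braid_reach op"
    using braid_reach_trans[OF rs(1)] split(1) by (simp add: replicate_app_Cons_same)
  moreover have "set rs' \<subseteq> X"
    using rs(2) split(1) op_closed by (auto simp: rs'_def)
  moreover have "generates X op rs'"
    unfolding rs'_def
  proof (rule generates_conjugate_prefix)
    show "generates X op (ps @ s)"
      using generates_mono[OF rs(3)] split(1) \<open>v \<in> set s\<close> by auto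
  qed (use rs(2) split(1) \<open>v \<in> set s\<close> in auto)
  moreover have "count_list t v \<le> count_list rs' v + Suc k"
    using rs(4) split c by (simp add: rs'_def)
  ultimately show ?case
    by blast
qed

lemma braid_equiv_extract_head:
  assumes us: "us \<in> tuples_gen X op n" and w: "w \<in> X"
    and many: "card X * period < n (rack_conn X op `` {w})"
  shows "\<exists>vs. generates X op vs \<and> w # vs \<in> tuples X op n \<and> (w # vs, us) \<in> braid_equiv op"
proof -
  let ?C = "rack_conn X op `` {w}"
  have C: "?C \<in> components X op" "?C \<subseteq> X"
    using component_of[OF w] rack_conn_subset[of X op] by auto
  have "card ?C * period \<le> card X * period"
    using card_mono[OF finite_carrier C(2)] by simp
  also have "\<dots> < n ?C"
    by (rule many)
  also have "n ?C = length (filter (\<lambda>x. x \<in> ?C) us)"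
    using us C(1) unfolding tuples_gen_def tuples_def by (simp del: Image_singleton_iff)
  finally obtain v where v: "v \<in> ?C" "period < count_list us v"
    using exists_count_list_gt[OF finite_subset[OF C(2) finite_carrier]] by blast
  have "set us \<subseteq> X" and "generates X op us"
    using us by (auto simp: tuples_gen_def tuples_def)
  then obtain rs where rs: "(us, replicate period v @ rs) \<in> braid_reach op" "set rs \<subseteq> X"
    "generates X op rs"
    using braid_reach_gather v(2) by blast
  have "(w, v) \<in> rack_conn X op"
    using v(1) by simp
  then have vw: "(v, w) \<in> rack_conn X op"
    using equiv_rack_conn[of X op] by (metis equivE symD)
  define vs where "vs = replicate (period - 1) w @ rs"
  have w_vs: "w # vs = replicate period w @ rs"
    unfolding vs_def by (metis Suc_diff_1 fact_gt_zero replicate_Suc append_Cons)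
  have "generates X op vs"
    using generates_mono[OF rs(3)] unfolding vs_def by simp
  moreover have "w # vs \<in> tuples X op n"
    unfolding w_vs using replicate_append_in_tuples_conn[OF vw braid_reach_tuples[OF rs(1)]] us
    by (simp add: tuples_gen_def)
  moreover have "(w # vs, us) \<in> braid_equiv op"
    unfolding w_vs
    using braid_equiv_trans[OF braid_equiv_sym[OF braid_equiv_block_conn[OF rs(2,3) vw]]
        braid_equiv_sym[OF braid_reach_imp_braid_equiv[OF rs(1)]]] .
  ultimately show ?thesis
    by blast
qed

lemma braid_equiv_concat_surjective:
  assumes large: "\<forall>C\<in>components X op. card X * period \<le> n C"
  shows "ws \<in> tuples X op m \<Longrightarrow> us \<in> tuples_gen X op (\<lambda>C. n C + m C) \<Longrightarrow>
    \<exists>vs\<in>tuples_gen X op n. (ws @ vs, us) \<in> braid_equiv op"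
proof (induction ws arbitrary: m us)
  case Nil
  then have "us \<in> tuples_gen X op n"
    by (auto simp: tuples_gen_def tuples_def)
  then show ?case
    using braid_equiv_refl by fastforce
next
  case (Cons w ws)
  let ?C = "rack_conn X op `` {w}"
  define m' where "m' = (\<lambda>C. if w \<in> C then m C - 1 else m C)"
  have w: "w \<in> X" and ws: "ws \<in> tuples X op m'"
    using Cons.prems(1) Cons_in_tuplesD[OF Cons.prems(1)] by (auto simp: tuples_def m'_def)
  have m_pos: "1 \<le> m C" if "C \<in> components X op" "w \<in> C" for C
    using Cons.prems(1) that by (auto simp: tuples_def)
  have "card X * period < n ?C + m ?C"
    using large m_pos component_of[OF w] by fastforce
  then obtain vs0 where vs0: "generates X op vs0" "w # vs0 \<in> tuples X op (\<lambda>C. n C + m C)"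
    "(w # vs0, us) \<in> braid_equiv op"
    using braid_equiv_extract_head[OF Cons.prems(2) w] by auto
  have "vs0 \<in> tuples_gen X op (\<lambda>C. n C + m' C)"
    using Cons_in_tuplesD[OF vs0(2)] vs0(1) m_pos by (auto simp: tuples_gen_def tuples_def m'_def)
  then obtain vs where vs: "vs \<in> tuples_gen X op n" "(ws @ vs, vs0) \<in> braid_equiv op"
    using Cons.IH[OF ws] by blast
  have "((w # ws) @ vs, w # vs0) \<in> braid_equiv op"
    using braid_equiv_append_left[OF vs(2), of "[w]"] by simp
  with vs(1) vs0(3) show ?case
    by (blast intro: braid_equiv_trans)
qed

end

theorem proposition4p22:
  fixes X :: "'a set" and op :: "'a \<Rightarrow> 'a \<Rightarrow> 'a"
  assumes "finite X" and "rack X op"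
  shows "\<exists>N::nat. \<forall>n m :: 'a set \<Rightarrow> nat.
           (\<forall>C\<in>components X op. N \<le> n C) \<longrightarrow>
           (\<forall>ws\<in>tuples X op m. \<forall>us\<in>tuples_gen X op (\<lambda>C. n C + m C).
              \<exists>vs\<in>tuples_gen X op n. (ws @ vs, us) \<in> braid_equiv op)"
proof -
  interpret finite_rack X op
    using assms by unfold_locales
  show ?thesis
    using braid_equiv_concat_surjective by (intro exI[of _ "card X * period"]) blast
qed

end
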